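(* Let $QC$ be an $n$-qubit quantum circuit composed of a sequence of stages, each stage being a $k$-controlled-NOT gate (for various $k\ge 0$) acting on some of the $n$ qubits. Suppose the circuit is affected by a single Pauli fault of type $\sigma_x$ or $\sigma_y$: an unwanted $\sigma_x$ or $\sigma_y$ is applied to one qubit wire at one gate-external error location, i.e. on that wire either before the first stage, between two consecutive stages, or after the last stage. Then for every computational basis input state $|s\rangle$ ($s\in\{0,1\}^n$), measuring the output of the faulty circuit in the computational basis detects the fault: the measured outcome differs from the output $GC|s\rangle$ of the ideal (fault-free) circuit $GC$.
   Context: Pauli matrices: $\sigma_x=|1\rangle\langle 0|+|0\rangle\langle 1|$, $\sigma_y=i|0\rangle\langle 1|-i|1\rangle\langle 0|$, $\sigma_z=|0\rangle\langle 0|-|1\rangle\langle 1|$. A $k$-controlled-NOT ($k$-CN) gate flips its target qubit (applies $\sigma_x$) exactly when all of its $k$ control qubits are in state $|1\rangle$, and acts as the identity otherwise; it is a permutation of computational basis states. The ideal circuit $GC$ is the same network without the fault. A fault is detected by an input if the computational-basis measurement outcome of the faulty circuit differs from that of $GC$ on that input. *)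

theory Defs
  imports Complex_Main
begin

text \<open>Computational basis states of n qubits: boolean lists of length n
 (False = |0>, True = |1>). A state vector is an amplitude function on basis states.\<close>

type_synonym basis = "bool list"
type_synonym qstate = "basis \<Rightarrow> complex"

definition ket :: "basis \<Rightarrow> qstate" where
  "ket x = (\<lambda>y. if y = x then 1 else 0)"

text \<open>A k-CN gate: set of control qubits C (k = card C) and a target qubit t.\<close>
type_synonym gate = "nat set \<times> nat"

definition wf_gate :: "nat \<Rightarrow> gate \<Rightarrow> bool" where
  "wf_gate n g = (fst g \<subseteq> {..<n} \<and> snd g < n \<and> snd g \<notin> fst g)"

definition cn_perm :: "gate \<Rightarrow> basis \<Rightarrow> basis" where
  "cn_perm g x = (if (\<forall>c\<in>fst g. x ! c) then x[snd g := \<not> x ! snd g] else x)"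

text \<open>Linear action of the gate: U |x> = |cn_perm g x>; since cn_perm g is an
 involution, (U psi)(y) = psi (cn_perm g y).\<close>
definition apply_gate :: "gate \<Rightarrow> qstate \<Rightarrow> qstate" where
  "apply_gate g \<psi> = (\<lambda>y. \<psi> (cn_perm g y))"

definition run :: "gate list \<Rightarrow> qstate \<Rightarrow> qstate" where
  "run gs \<psi> = fold apply_gate gs \<psi>"

text \<open>Single-qubit operators as 2x2 matrices M a b = <a|M|b>.\<close>
type_synonym op1 = "bool \<Rightarrow> bool \<Rightarrow> complex"

definition sigma_x :: op1 where
  "sigma_x a b = (if a \<noteq> b then 1 else 0)"

definition sigma_y :: op1 where
  "sigma_y a b = (if \<not> a \<and> b then \<i> else if a \<and> \<not> b then - \<i> else 0)"

definition apply_1q :: "op1 \<Rightarrow> nat \<Rightarrow> qstate \<Rightarrow> qstate" where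
  "apply_1q M q \<psi> = (\<lambda>y. \<Sum>b\<in>UNIV. M (y ! q) b * \<psi> (y[q := b]))"

text \<open>Faulty circuit: Pauli P on wire q at error location j (0 = before first stage,
 length gs = after last stage), input basis state s.\<close>
definition faulty_run :: "gate list \<Rightarrow> nat \<Rightarrow> nat \<Rightarrow> op1 \<Rightarrow> qstate \<Rightarrow> qstate" where
  "faulty_run gs j q P \<psi> = run (drop j gs) (apply_1q P q (run (take j gs) \<psi>))"

definition meas_prob :: "qstate \<Rightarrow> basis \<Rightarrow> real" where
  "meas_prob \<psi> t = (cmod (\<psi> t))\<^sup>2"

end

theory Submission
  imports Defs
begin

(* A circuit of k-CN gates permutes basis states, so it maps |s> to the basis state
   |pi s>, where pi is the composite permutation. The fault sigma_x or sigma_y has zero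
   diagonal and unimodular off-diagonal entries, so it maps a basis state to a phase times
   the basis state with the faulty qubit flipped. Splitting the circuit at the error
   location as pi = pi2 o pi1, the faulty output is therefore a phase times
   |pi2 (flip (pi1 s))>, while the ideal output is |pi2 (pi1 s)>. Both measurements are
   deterministic, and their outcomes differ because pi2 is injective. *)

lemma cn_perm_cn_perm:
  assumes "snd g \<notin> fst g"
  shows "cn_perm g (cn_perm g x) = x"
  using assms
  by (cases "snd g < length x") (auto simp: cn_perm_def list_update_beyond nth_list_update)

lemma inj_cn_perm:
  assumes "snd g \<notin> fst g"
  shows "inj (cn_perm g)"
  using cn_perm_cn_perm[OF assms] by (metis injI)

lemma length_cn_perm [simp]: "length (cn_perm g x) = length x"
  by (simp add: cn_perm_def)

lemma length_fold_cn_perm [simp]: "length (fold cn_perm gs x) = length x"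
  by (induction gs arbitrary: x) simp_all

lemma inj_fold_cn_perm:
  assumes "\<forall>g\<in>set gs. snd g \<notin> fst g"
  shows "inj (fold cn_perm gs)"
  using assms
proof (induction gs)
  case Nil
  then show ?case by simp
next
  case (Cons g gs)
  then have "inj (fold cn_perm gs \<circ> cn_perm g)"
    by (intro inj_compose inj_cn_perm) simp_all
  then show ?case by (simp add: comp_def)
qed

lemma apply_gate_ket:
  assumes "snd g \<notin> fst g"
  shows "apply_gate g (ket x) = ket (cn_perm g x)"
proof
  fix y
  have "cn_perm g y = x \<longleftrightarrow> y = cn_perm g x"
    using cn_perm_cn_perm[OF assms] by metis
  then show "apply_gate g (ket x) y = ket (cn_perm g x) y"
    by (simp add: apply_gate_def ket_def)
qed

lemma run_ket:
  assumes "\<forall>g\<in>set gs. snd g \<notin> fst g"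
  shows "run gs (ket x) = ket (fold cn_perm gs x)"
  using assms
  by (induction gs arbitrary: x) (simp_all add: run_def apply_gate_ket)

lemma run_scale: "run gs (\<lambda>y. c * \<psi> y) = (\<lambda>y. c * run gs \<psi> y)"
  by (induction gs arbitrary: \<psi>) (simp_all add: run_def apply_gate_def)

lemma run_append: "run (gs @ hs) \<psi> = run hs (run gs \<psi>)"
  by (simp add: run_def)

lemma apply_1q_ket:
  assumes "q < length x"
  shows "apply_1q M q (ket x) y = (if y[q := x ! q] = x then M (y ! q) (x ! q) else 0)"
proof -
  have summand: "M (y ! q) b * ket x (y[q := b])
      = (if b = x ! q then (if y[q := x ! q] = x then M (y ! q) b else 0) else 0)" for b
  proof (cases "b = x ! q")
    case False
    then have "y[q := b] \<noteq> x"
      using assms by auto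
    with False show ?thesis by (simp add: ket_def)
  qed (simp add: ket_def)
  show ?thesis
    unfolding apply_1q_def summand by simp
qed

lemma apply_1q_ket_zero_diagonal:
  assumes "q < length x" and "\<And>b. M b b = 0"
  shows "apply_1q M q (ket x) = (\<lambda>y. M (\<not> x ! q) (x ! q) * ket (x[q := \<not> x ! q]) y)"
proof
  fix y
  define x' where "x' = x[q := \<not> x ! q]"
  have "x' ! q \<noteq> x ! q"
    using assms(1) by (simp add: x'_def)
  then have "x' \<noteq> x"
    by blast
  have lhs: "apply_1q M q (ket x) y = (if y[q := x ! q] = x then M (y ! q) (x ! q) else 0)"
    by (rule apply_1q_ket[OF assms(1)])
  consider "y = x" | "y = x'" | "y[q := x ! q] \<noteq> x" "y \<noteq> x'"
  proof (cases "y[q := x ! q] = x")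
    case True
    then have "y = x[q := y ! q]"
      by (metis list_update_id list_update_overwrite)
    then show ?thesis
      using that by (cases "y ! q = x ! q") (auto simp: x'_def)
  next
    case False
    moreover have "x'[q := x ! q] = x"
      by (simp add: x'_def)
    ultimately show ?thesis
      using that by blast
  qed
  then show "apply_1q M q (ket x) y = M (\<not> x ! q) (x ! q) * ket x' y"
    unfolding lhs by cases (use \<open>x' \<noteq> x\<close> assms in \<open>simp_all add: ket_def x'_def\<close>)
qed

lemma sigma_x_zero_diagonal: "sigma_x b b = 0"
  and sigma_y_zero_diagonal: "sigma_y b b = 0"
  by (simp_all add: sigma_x_def sigma_y_def)

lemma norm_sigma_x_off_diagonal: "a \<noteq> b \<Longrightarrow> cmod (sigma_x a b) = 1"
  and norm_sigma_y_off_diagonal: "a \<noteq> b \<Longrightarrow> cmod (sigma_y a b) = 1"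
  by (auto simp: sigma_x_def sigma_y_def)

lemma meas_prob_scaled_ket:
  assumes "cmod c = 1"
  shows "meas_prob (\<lambda>y. c * ket x y) x = 1"
  using assms by (simp add: meas_prob_def ket_def)

theorem theorem1:
  fixes n :: nat and gs :: "gate list" and j q :: nat and P :: op1 and s :: basis
  assumes "\<forall>g\<in>set gs. wf_gate n g"
    and "j \<le> length gs"
    and "q < n"
    and "P = sigma_x \<or> P = sigma_y"
    and "length s = n"
  shows "\<exists>u t. meas_prob (run gs (ket s)) u = 1
             \<and> meas_prob (faulty_run gs j q P (ket s)) t = 1
             \<and> t \<noteq> u"
proof -
  have wf: "\<forall>g\<in>set gs. snd g \<notin> fst g"
    using assms(1) by (auto simp: wf_gate_def)
  then have wf_take: "\<forall>g\<in>set (take j gs). snd g \<notin> fst g"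
    and wf_drop: "\<forall>g\<in>set (drop j gs). snd g \<notin> fst g"
    by (auto dest: in_set_takeD in_set_dropD)
  define x where "x = fold cn_perm (take j gs) s"
  define x' where "x' = x[q := \<not> x ! q]"
  define \<pi> where "\<pi> = fold cn_perm (drop j gs)"
  define c where "c = P (\<not> x ! q) (x ! q)"
  have "q < length x"
    using assms(3,5) by (simp add: x_def)
  have "cmod c = 1" and "apply_1q P q (ket x) = (\<lambda>y. c * ket x' y)"
    using assms(4) apply_1q_ket_zero_diagonal[OF \<open>q < length x\<close>]
    by (auto simp: c_def x'_def sigma_x_zero_diagonal sigma_y_zero_diagonal
        norm_sigma_x_off_diagonal norm_sigma_y_off_diagonal)
  then have faulty: "faulty_run gs j q P (ket s) = (\<lambda>y. c * ket (\<pi> x') y)"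
    by (simp add: faulty_run_def run_ket wf_take wf_drop run_scale x_def \<pi>_def)
  have ideal: "run gs (ket s) = ket (\<pi> x)"
    using run_append[of "take j gs" "drop j gs"] by (simp add: run_ket wf_take wf_drop x_def \<pi>_def)
  have "\<pi> x' \<noteq> \<pi> x"
    using inj_fold_cn_perm[OF wf_drop] \<open>q < length x\<close>
    by (metis \<pi>_def injD nth_list_update_eq x'_def)
  then show ?thesis
    using meas_prob_scaled_ket[OF \<open>cmod c = 1\<close>, of "\<pi> x'"] meas_prob_scaled_ket[of 1 "\<pi> x"]
    by (intro exI[of _ "\<pi> x"] exI[of _ "\<pi> x'"]) (simp add: faulty ideal)
qed

end
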